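(* Let $n>1$ be an integer. (1) If $n$ is $2$-$T_0T^\ast$-perfect then $n=p_1^3$ for some prime $p_1$; (2) if $n$ is $3$-$T_0T^\ast$-perfect then $n=p_1^5$; (3) if $n$ is $4$-$T_0T^\ast$-perfect then $n=p_1^7$; (4) if $n$ is $5$-$T_0T^\ast$-perfect then $n=p_1^9$; (5) if $n$ is $6$-$T_0T^\ast$-perfect then $n=p_1^{11}$; (6) if $n$ is $7$-$T_0T^\ast$-perfect then $n=p_1^{13}$; (7) if $n$ is $8$-$T_0T^\ast$-perfect then $n=p_1^{15}$; (8) if $n$ is $9$-$T_0T^\ast$-perfect then $n=p_1^{17}$ or $n=p_1p_2$ for distinct primes $p_1,p_2$; (9) if $n$ is $10$-$T_0T^\ast$-perfect then $n=p_1^{19}$; where in each case $p_1$ is a prime.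
   Context: For a positive integer $m$, $T(m)$ denotes the product of all positive divisors of $m$, and $T^\ast(m)$ the product of all unitary divisors of $m$ (divisors $d$ with $\gcd(d,m/d)=1$). For an integer $k\ge 2$, an integer $n>1$ is called $k$-$T_0T^\ast$-perfect if $T(T^\ast(n))=n^k$. *)

theory Defs
  imports "HOL-Computational_Algebra.Primes"
begin

definition divisor_prod :: "nat \<Rightarrow> nat" where
  "divisor_prod m = (\<Prod>d\<in>{d. d dvd m}. d)"

definition unitary_divisor_prod :: "nat \<Rightarrow> nat" where
  "unitary_divisor_prod m = (\<Prod>d\<in>{d. d dvd m \<and> coprime d (m div d)}. d)"

definition k_T0Tstar_perfect :: "nat \<Rightarrow> nat \<Rightarrow> bool" where
  "k_T0Tstar_perfect k n \<longleftrightarrow> n > 1 \<and> divisor_prod (unitary_divisor_prod n) = n ^ k"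

end

theory Submission
  imports Defs
begin

text \<open>
  Pairing each divisor d of m with m div d gives T(m)^2 = m^\<tau>(m), and likewise
  T*(n)^2 = n^(2^s) for n with s distinct prime factors. So if n = \<Prod> p^a(p), then
  T*(n) = \<Prod> p^(2^(s-1) a(p)) and T(T*(n)) = n^k amounts to
  4k = 2^s \<Prod>(2^(s-1) a(p) + 1). For k < 15 this forces either s = 1, i.e. n = p^(2k-1),
  or s = 2 with both exponents 1, which gives k = 9 and n = p q; already s = 3 would
  need 4k \<ge> 8 \<cdot> 5^3.
\<close>

definition unitary_divisors :: "nat \<Rightarrow> nat set" where
  "unitary_divisors m = {d. d dvd m \<and> coprime d (m div d)}"

lemma prod_set_closed_under_complement_square:
  fixes m :: nat and S :: "nat set"
  assumes "finite S" "m > 0" "\<And>d. d \<in> S \<Longrightarrow> d dvd m \<and> m div d \<in> S"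
  shows "(\<Prod>S) ^ 2 = m ^ card S"
proof -
  have cancel: "m div (m div d) = d" if "d \<in> S" for d
    using assms(2) assms(3)[OF that] by auto
  have "inj_on (\<lambda>d. m div d) S"
    by (metis cancel inj_onI)
  moreover have "(\<lambda>d. m div d) ` S = S"
  proof
    show "S \<subseteq> (\<lambda>d. m div d) ` S"
      using assms(3) cancel by (metis image_eqI subsetI)
  qed (use assms(3) in auto)
  ultimately have complement: "(\<Prod>d\<in>S. m div d) = \<Prod>S"
    using prod.reindex[of "\<lambda>d. m div d" S id] by simp
  have "(\<Prod>S) ^ 2 = (\<Prod>d\<in>S. d) * (\<Prod>d\<in>S. m div d)"
    by (simp add: complement power2_eq_square)
  also have "\<dots> = (\<Prod>d\<in>S. d * (m div d))"
    by (simp add: prod.distrib)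
  also have "\<dots> = (\<Prod>d\<in>S. m)"
    using assms(3) by (intro prod.cong) auto
  finally show ?thesis by simp
qed

lemma divisor_prod_square: "m > 0 \<Longrightarrow> divisor_prod m ^ 2 = m ^ card {d. d dvd m}"
  unfolding divisor_prod_def
  by (rule prod_set_closed_under_complement_square) auto

lemma unitary_divisor_prod_square:
  "m > 0 \<Longrightarrow> unitary_divisor_prod m ^ 2 = m ^ card (unitary_divisors m)"
  unfolding unitary_divisor_prod_def unitary_divisors_def
  by (rule prod_set_closed_under_complement_square)
     (auto simp: coprime_commute)

lemma coprime_mult_dvd_cancel:
  fixes x y d e d' e' :: nat
  assumes "coprime x y" "d dvd x" "e dvd y" "d' dvd x" "e' dvd y" "d * e = d' * e'"
  shows "d = d' \<and> e = e'"
proof -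
  have gcd_left: "gcd (a * b) x = a" if "a dvd x" "b dvd y" for a b
    using that assms(1) coprime_divisors[of b y x x]
    by (simp add: coprime_commute gcd_mult_left_right_cancel)
  have gcd_right: "gcd (a * b) y = b" if "a dvd x" "b dvd y" for a b
    using that assms(1) coprime_divisors[of a x y y]
    by (simp add: coprime_commute gcd_mult_left_left_cancel)
  show ?thesis
    using gcd_left[of d e] gcd_left[of d' e'] gcd_right[of d e] gcd_right[of d' e'] assms
    by metis
qed

lemma bij_betw_mult_divisors:
  fixes x y :: nat
  assumes "coprime x y"
  shows "bij_betw (\<lambda>(d, e). d * e) ({d. d dvd x} \<times> {e. e dvd y}) {d. d dvd x * y}"
proof (rule bij_betwI')
  fix a b assume "a \<in> {d. d dvd x} \<times> {e. e dvd y}" "b \<in> {d. d dvd x} \<times> {e. e dvd y}"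
  then show "((case a of (d, e) \<Rightarrow> d * e) = (case b of (d, e) \<Rightarrow> d * e)) = (a = b)"
    using coprime_mult_dvd_cancel[OF assms] by auto
next
  fix z assume "z \<in> {d. d dvd x * y}"
  then obtain d e where "z = d * e" "d dvd x" "e dvd y"
    using division_decomp by blast
  then show "\<exists>a\<in>{d. d dvd x} \<times> {e. e dvd y}. z = (case a of (d, e) \<Rightarrow> d * e)"
    by auto
qed (auto intro: mult_dvd_mono)

lemma mult_mem_unitary_divisors_iff:
  fixes x y d e :: nat
  assumes "coprime x y" "d dvd x" "e dvd y"
  shows "d * e \<in> unitary_divisors (x * y) \<longleftrightarrow> d \<in> unitary_divisors x \<and> e \<in> unitary_divisors y"
proof -
  have "coprime d (y div e)" "coprime e (x div d)"
    using assms coprime_divisors[of d x "y div e" y] coprime_divisors[of e y "x div d" x]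
    by (auto simp: coprime_commute)
  then have "coprime (d * e) ((x div d) * (y div e)) \<longleftrightarrow>
      coprime d (x div d) \<and> coprime e (y div e)"
    by auto
  then show ?thesis
    using assms by (simp add: unitary_divisors_def div_mult_div_if_dvd mult_dvd_mono)
qed

lemma bij_betw_mult_unitary_divisors:
  fixes x y :: nat
  assumes "coprime x y"
  shows "bij_betw (\<lambda>(d, e). d * e) (unitary_divisors x \<times> unitary_divisors y) (unitary_divisors (x * y))"
proof -
  have sub: "unitary_divisors x \<times> unitary_divisors y \<subseteq> {d. d dvd x} \<times> {e. e dvd y}"
    by (auto simp: unitary_divisors_def)
  have "(\<lambda>(d, e). d * e) ` (unitary_divisors x \<times> unitary_divisors y) = unitary_divisors (x * y)"
  proof
    show "unitary_divisors (x * y) \<subseteq> (\<lambda>(d, e). d * e) ` (unitary_divisors x \<times> unitary_divisors y)"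
    proof
      fix z assume z: "z \<in> unitary_divisors (x * y)"
      then obtain d e where "z = d * e" "d dvd x" "e dvd y"
        using division_decomp unfolding unitary_divisors_def by blast
      with z show "z \<in> (\<lambda>(d, e). d * e) ` (unitary_divisors x \<times> unitary_divisors y)"
        using mult_mem_unitary_divisors_iff[OF assms] by force
    qed
  qed (use mult_mem_unitary_divisors_iff[OF assms] sub in auto)
  then show ?thesis
    using bij_betw_mult_divisors[OF assms] sub
    by (auto simp: bij_betw_def intro: inj_on_subset)
qed

lemma card_divisors_mult:
  "coprime x y \<Longrightarrow> card {d. d dvd x * y} = card {d. d dvd x} * card {d. d dvd (y::nat)}"
  using bij_betw_same_card[OF bij_betw_mult_divisors] by (simp add: card_cartesian_product)

lemma card_unitary_divisors_mult:
  "coprime x y \<Longrightarrow> card (unitary_divisors (x * y)) = card (unitary_divisors x) * card (unitary_divisors y)"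
  using bij_betw_same_card[OF bij_betw_mult_unitary_divisors] by (simp add: card_cartesian_product)

lemma card_divisors_prime_power:
  assumes "prime (p::nat)"
  shows "card {d. d dvd p ^ a} = a + 1"
proof -
  have "{d. d dvd p ^ a} = (\<lambda>i. p ^ i) ` {0..a}"
    using divides_primepow_nat[OF assms] by auto
  moreover have "inj_on (\<lambda>i. p ^ i) {0..a}"
    using assms by (intro inj_onI) (metis power_inject_exp prime_gt_1_nat)
  ultimately show ?thesis by (simp add: card_image)
qed

lemma unitary_divisors_prime_power:
  assumes "prime (p::nat)" "a > 0"
  shows "unitary_divisors (p ^ a) = {1, p ^ a}"
proof
  show "unitary_divisors (p ^ a) \<subseteq> {1, p ^ a}"
  proof
    fix d assume "d \<in> unitary_divisors (p ^ a)"
    then obtain i where i: "i \<le> a" "d = p ^ i" "coprime (p ^ i) (p ^ a div p ^ i)"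
      unfolding unitary_divisors_def using divides_primepow_nat[OF assms(1)] by auto
    then have "coprime (p ^ i) (p ^ (a - i))"
      using assms(1) by (simp add: power_diff prime_gt_0_nat)
    then have "i = 0 \<or> i = a"
      using i(1) assms(1) by auto
    then show "d \<in> {1, p ^ a}" using i by auto
  qed
qed (use assms in \<open>auto simp: unitary_divisors_def prime_gt_0_nat\<close>)

lemma card_unitary_divisors_prime_power:
  "prime (p::nat) \<Longrightarrow> a > 0 \<Longrightarrow> card (unitary_divisors (p ^ a)) = 2"
  by (metis One_nat_def card_2_iff less_irrefl_nat one_eq_prime_power_iff unitary_divisors_prime_power)

lemma multiplicative_prod_prime_powers:
  fixes f :: "nat \<Rightarrow> 'a :: comm_monoid_mult"
  assumes "f 1 = 1" "\<And>x y. coprime x y \<Longrightarrow> f (x * y) = f x * f y"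
    and "finite P" "\<forall>p\<in>P. prime p"
  shows "f (\<Prod>p\<in>P. p ^ e p) = (\<Prod>p\<in>P. f (p ^ e p))"
  using assms(3,4)
proof (induction P rule: finite_induct)
  case (insert p F)
  have "coprime (p ^ e p) (\<Prod>q\<in>F. q ^ e q)"
  proof (rule prod_coprime_right)
    fix q assume "q \<in> F"
    then have "coprime p q"
      using insert by (intro primes_coprime) auto
    then show "coprime (p ^ e p) (q ^ e q)" by simp
  qed
  then show ?case
    using insert assms(2) by simp
qed (use assms(1) in simp)

lemma card_divisors_prod_prime_powers:
  fixes P :: "nat set"
  shows "finite P \<Longrightarrow> \<forall>p\<in>P. prime p \<Longrightarrow> card {d. d dvd (\<Prod>p\<in>P. p ^ e p)} = (\<Prod>p\<in>P. e p + 1)"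
  using multiplicative_prod_prime_powers[of "\<lambda>m. card {d. d dvd m}" P e]
  by (simp add: card_divisors_mult card_divisors_prime_power)

lemma card_unitary_divisors_prod_prime_powers:
  assumes "finite P" "\<forall>p\<in>P. prime p \<and> e p > 0"
  shows "card (unitary_divisors (\<Prod>p\<in>P. p ^ e p)) = 2 ^ card P"
proof -
  have "unitary_divisors 1 = {1}"
    by (auto simp: unitary_divisors_def)
  then have "card (unitary_divisors (\<Prod>p\<in>P. p ^ e p)) = (\<Prod>p\<in>P. card (unitary_divisors (p ^ e p)))"
    using assms by (intro multiplicative_prod_prime_powers) (auto simp: card_unitary_divisors_mult)
  also have "\<dots> = (\<Prod>p\<in>P. 2)"
    using assms(2) by (intro prod.cong) (auto simp: card_unitary_divisors_prime_power)
  finally show ?thesis by simp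
qed

lemma T0Tstar_exponent_equation:
  fixes P :: "nat set" and a :: "nat \<Rightarrow> nat"
  defines "n \<equiv> \<Prod>p\<in>P. p ^ a p"
  assumes "finite P" "P \<noteq> {}" "\<forall>p\<in>P. prime p \<and> a p > 0"
    and "divisor_prod (unitary_divisor_prod n) = n ^ k"
  shows "4 * k = 2 ^ card P * (\<Prod>p\<in>P. 2 ^ (card P - 1) * a p + 1)"
proof -
  define c :: nat where "c = 2 ^ (card P - 1)"
  define m where "m = unitary_divisor_prod n"
  have two_c: "2 ^ card P = 2 * c"
    using assms(2,3) by (simp add: c_def card_gt_0_iff flip: power_Suc)
  have n0: "n > 0"
    using assms(4) by (auto simp: n_def prime_gt_0_nat intro: prod_pos)
  have n1: "n > 1"
  proof -
    obtain p where "p \<in> P" using assms(3) by blast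
    then have "p ^ a p dvd n"
      unfolding n_def using assms(2) by (rule dvd_prodI[rotated])
    moreover have "p ^ a p > 1"
      using \<open>p \<in> P\<close> assms(4) by (intro one_less_power) (auto simp: prime_gt_Suc_0_nat)
    ultimately show ?thesis
      using n0 dvd_imp_le by (metis less_le_trans)
  qed
  have "m ^ 2 = n ^ (2 * c)"
    using unitary_divisor_prod_square[OF n0] card_unitary_divisors_prod_prime_powers[OF assms(2,4)]
    by (simp add: m_def n_def two_c)
  also have "\<dots> = (\<Prod>p\<in>P. p ^ (c * a p)) ^ 2"
    by (simp add: n_def prod_power_distrib ac_simps flip: power_mult)
  finally have m_factorization: "m = (\<Prod>p\<in>P. p ^ (c * a p))"
    by (simp add: power_eq_iff_eq_base)
  have m0: "m > 0"
    using assms(4) by (auto simp: m_factorization prime_gt_0_nat intro: prod_pos)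
  have "n ^ (4 * k) = (divisor_prod m ^ 2) ^ 2"
    using assms(5) by (simp add: m_def flip: power_mult)
  also have "\<dots> = (m ^ 2) ^ card {d. d dvd m}"
    by (simp add: divisor_prod_square[OF m0] flip: power_mult) (simp add: mult.commute)
  also have "\<dots> = n ^ (2 * c * card {d. d dvd m})"
    by (simp add: \<open>m ^ 2 = n ^ (2 * c)\<close> power_mult)
  finally have k: "4 * k = 2 * c * card {d. d dvd m}"
    using n1 by simp
  have tau_m: "card {d. d dvd m} = (\<Prod>p\<in>P. c * a p + 1)"
    using card_divisors_prod_prime_powers[of P "\<lambda>p. c * a p"] assms(2,4)
    by (simp add: m_factorization)
  show ?thesis
    unfolding two_c c_def[symmetric] by (simp only: k tau_m)
qed

lemma T0Tstar_exponent_equation_small_solutions: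
  fixes P :: "nat set" and a :: "nat \<Rightarrow> nat"
  assumes "finite P" "P \<noteq> {}" "\<forall>p\<in>P. a p > 0"
    and "4 * k = 2 ^ card P * (\<Prod>p\<in>P. 2 ^ (card P - 1) * a p + 1)" and "k < 15"
  shows "(\<exists>p. P = {p} \<and> a p = 2 * k - 1)
    \<or> (k = 9 \<and> (\<exists>p q. p \<noteq> q \<and> P = {p, q} \<and> a p = 1 \<and> a q = 1))"
proof -
  have "card P > 0"
    using assms(1,2) by (simp add: card_gt_0_iff)
  then consider "card P = 1" | "card P = 2" | "card P \<ge> 3"
    by linarith
  then show ?thesis
  proof cases
    case 1
    then obtain p where "P = {p}"
      using card_1_singletonE by blast
    then show ?thesis
      using assms(4) by simp
  next
    case 2
    then obtain p q where pq: "p \<noteq> q" "P = {p, q}"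
      by (auto simp: card_2_iff)
    then have k: "k = (2 * a p + 1) * (2 * a q + 1)"
      using assms(4) by simp
    have factors_ge_3: "3 \<le> 2 * a p + 1" "3 \<le> 2 * a q + 1"
      using assms(3) pq by auto
    have "a p = 1 \<and> a q = 1"
    proof (rule ccontr)
      assume "\<not> (a p = 1 \<and> a q = 1)"
      then have "5 \<le> 2 * a p + 1 \<or> 5 \<le> 2 * a q + 1"
        using assms(3) pq by auto
      then have "5 * 3 \<le> k \<or> 3 * 5 \<le> k"
        unfolding k using mult_le_mono factors_ge_3 by blast
      then show False
        using assms(5) by simp
    qed
    then show ?thesis
      using k pq by auto
  next
    case 3
    have "(\<Prod>p\<in>P. 5) \<le> (\<Prod>p\<in>P. 2 ^ (card P - 1) * a p + 1)"
    proof (rule prod_mono)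
      fix p assume "p \<in> P"
      have "2 ^ 2 \<le> (2::nat) ^ (card P - 1)"
        using 3 by (intro power_increasing) auto
      then have "4 * 1 \<le> 2 ^ (card P - 1) * a p"
        using assms(3) \<open>p \<in> P\<close> by (intro mult_le_mono) auto
      then show "0 \<le> (5::nat) \<and> 5 \<le> 2 ^ (card P - 1) * a p + 1"
        by simp
    qed
    moreover have "(5::nat) ^ 3 \<le> 5 ^ card P"
      by (rule power_increasing) (use 3 in auto)
    moreover have "(2::nat) ^ 3 \<le> 2 ^ card P"
      by (rule power_increasing) (use 3 in auto)
    ultimately have "2 ^ 3 * 5 ^ 3 \<le> 4 * k"
      unfolding assms(4) by (intro mult_le_mono) auto
    then show ?thesis
      using assms(5) by simp
  qed
qed

lemma T0Tstar_perfect_small_index: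
  assumes "k_T0Tstar_perfect k n" "k < 15"
  shows "(\<exists>p. prime p \<and> n = p ^ (2 * k - 1))
    \<or> (k = 9 \<and> (\<exists>p q. prime p \<and> prime q \<and> p \<noteq> q \<and> n = p * q))"
proof -
  define P where "P = prime_factors n"
  define a where "a p = multiplicity p n" for p
  have n: "n > 1" "divisor_prod (unitary_divisor_prod n) = n ^ k"
    using assms(1) by (simp_all add: k_T0Tstar_perfect_def)
  have n_factorization: "n = (\<Prod>p\<in>P. p ^ a p)"
    unfolding P_def a_def using n(1) by (intro prime_factorization_nat) simp
  have "P \<noteq> {}"
    using n(1) n_factorization by auto
  moreover have "finite P"
    by (simp add: P_def)
  moreover have "\<forall>p\<in>P. prime p \<and> a p > 0"
    by (auto simp: P_def a_def prime_factors_multiplicity)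
  ultimately have P: "finite P" "P \<noteq> {}" "\<forall>p\<in>P. prime p \<and> a p > 0"
    by blast+
  have "4 * k = 2 ^ card P * (\<Prod>p\<in>P. 2 ^ (card P - 1) * a p + 1)"
    using T0Tstar_exponent_equation[OF P, folded n_factorization] n(2) .
  then have "(\<exists>p. P = {p} \<and> a p = 2 * k - 1)
      \<or> (k = 9 \<and> (\<exists>p q. p \<noteq> q \<and> P = {p, q} \<and> a p = 1 \<and> a q = 1))"
    using P assms(2) by (intro T0Tstar_exponent_equation_small_solutions) auto
  then show ?thesis
  proof (elim disjE exE conjE)
    fix p assume "P = {p}" "a p = 2 * k - 1"
    then show ?thesis
      using P(3) n_factorization by auto
  next
    fix p q assume "k = 9" "p \<noteq> q" "P = {p, q}" "a p = 1" "a q = 1"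
    then show ?thesis
      using P(3) n_factorization by auto
  qed
qed

theorem mainTheorem6:
  fixes n :: nat
  assumes "n > 1"
  shows "(k_T0Tstar_perfect 2 n \<longrightarrow> (\<exists>p. prime p \<and> n = p ^ 3))
    \<and> (k_T0Tstar_perfect 3 n \<longrightarrow> (\<exists>p. prime p \<and> n = p ^ 5))
    \<and> (k_T0Tstar_perfect 4 n \<longrightarrow> (\<exists>p. prime p \<and> n = p ^ 7))
    \<and> (k_T0Tstar_perfect 5 n \<longrightarrow> (\<exists>p. prime p \<and> n = p ^ 9))
    \<and> (k_T0Tstar_perfect 6 n \<longrightarrow> (\<exists>p. prime p \<and> n = p ^ 11))
    \<and> (k_T0Tstar_perfect 7 n \<longrightarrow> (\<exists>p. prime p \<and> n = p ^ 13))
    \<and> (k_T0Tstar_perfect 8 n \<longrightarrow> (\<exists>p. prime p \<and> n = p ^ 15))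
    \<and> (k_T0Tstar_perfect 9 n \<longrightarrow>
         (\<exists>p. prime p \<and> n = p ^ 17) \<or> (\<exists>p q. prime p \<and> prime q \<and> p \<noteq> q \<and> n = p * q))
    \<and> (k_T0Tstar_perfect 10 n \<longrightarrow> (\<exists>p. prime p \<and> n = p ^ 19))"
  using T0Tstar_perfect_small_index[of 2 n] T0Tstar_perfect_small_index[of 3 n]
    T0Tstar_perfect_small_index[of 4 n] T0Tstar_perfect_small_index[of 5 n]
    T0Tstar_perfect_small_index[of 6 n] T0Tstar_perfect_small_index[of 7 n]
    T0Tstar_perfect_small_index[of 8 n] T0Tstar_perfect_small_index[of 9 n]
    T0Tstar_perfect_small_index[of 10 n]
  by simp

end
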